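(* Let $\bar P=\prod_{x\in\mathbb Z}\bar P_x$ be a product probability measure on $\Omega=\mathbb R^{\mathbb Z}$ and suppose the law $\bar P_0$ of $\omega_0$ is symmetric ($\omega_0$ and $-\omega_0$ have the same distribution). Then for every $n\ge0$ and $x\in\mathbb Z$, $$\mathbb P_n(X_n=x)=P^{\mathbf 0}_n(X_n=x),$$ where $\mathbb P_n(X_n=x)=\int_\Omega P^{\omega}_n(X_n=x)\,\bar P(d\omega)$ and $P^{\mathbf 0}_n$ is the quenched law for $\omega\equiv0$ (the Hadamard walk started from $\varphi_*$).
   Context: $U_x=\frac{1}{\sqrt2}\begin{pmatrix} e^{i\omega_x} & 1\\ 1 & -e^{-i\omega_x}\end{pmatrix}=\begin{pmatrix} a_x & b_x\\ c_x & d_x\end{pmatrix}$, $P_x=\begin{pmatrix} a_x & b_x\\ 0&0\end{pmatrix}$, $Q_x=\begin{pmatrix} 0&0\\ c_x & d_x\end{pmatrix}$. $\Xi_0(0,0)=I$, $\Xi_n(l,m)=0$ if $l<0$ or $m<0$, and $\Xi_{n+1}(l,m)=P_{x+1}\Xi_n(l-1,m)+Q_{x-1}\Xi_n(l,m-1)$ for $l,m\ge0$, $l+m=n+1$, $x=-l+m$. With $\varphi_*={}^T[1/\sqrt2,i/\sqrt2]$, $P^{\omega}_n(X_n=x)=\|\Xi_n(l,m)\varphi_*\|^2$ for $x=-l+m$, $n=l+m$, $l,m\ge0$ (zero otherwise). *)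

theory Defs
  imports "HOL-Probability.Probability"
begin

text \<open>2x2 complex matrices are represented as complex^2^2 (HOL-Analysis), with index 1 the
first and index 2 the second row/column. The environment is \<omega> :: int \<Rightarrow> real.\<close>

definition mat2 :: "complex \<Rightarrow> complex \<Rightarrow> complex \<Rightarrow> complex \<Rightarrow> complex^2^2" where
  "mat2 a b c d = (\<chi> i j. if i = 1 then (if j = 1 then a else b) else (if j = 1 then c else d))"

definition vec2 :: "complex \<Rightarrow> complex \<Rightarrow> complex^2" where
  "vec2 a b = (\<chi> i. if i = 1 then a else b)"

definition Ucoin :: "(int \<Rightarrow> real) \<Rightarrow> int \<Rightarrow> complex^2^2" where
  "Ucoin \<omega> x = mat2 (cis (\<omega> x) / sqrt 2) (1 / sqrt 2) (1 / sqrt 2) (- cis (- \<omega> x) / sqrt 2)"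

definition Pmat :: "(int \<Rightarrow> real) \<Rightarrow> int \<Rightarrow> complex^2^2" where
  "Pmat \<omega> x = mat2 (Ucoin \<omega> x $ 1 $ 1) (Ucoin \<omega> x $ 1 $ 2) 0 0"

definition Qmat :: "(int \<Rightarrow> real) \<Rightarrow> int \<Rightarrow> complex^2^2" where
  "Qmat \<omega> x = mat2 0 0 (Ucoin \<omega> x $ 2 $ 1) (Ucoin \<omega> x $ 2 $ 2)"

text \<open>Xi \<omega> l m is \<Xi>_n(l,m) with n = l + m (only defined there), position x = -l+m.\<close>
fun Xi :: "(int \<Rightarrow> real) \<Rightarrow> nat \<Rightarrow> nat \<Rightarrow> complex^2^2" where
  "Xi \<omega> 0 0 = mat 1"
| "Xi \<omega> (Suc l) 0 = Pmat \<omega> (- int (Suc l) + 1) ** Xi \<omega> l 0"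
| "Xi \<omega> 0 (Suc m) = Qmat \<omega> (int (Suc m) - 1) ** Xi \<omega> 0 m"
| "Xi \<omega> (Suc l) (Suc m) =
     Pmat \<omega> (- int (Suc l) + int (Suc m) + 1) ** Xi \<omega> l (Suc m)
   + Qmat \<omega> (- int (Suc l) + int (Suc m) - 1) ** Xi \<omega> (Suc l) m"

definition phi_star :: "complex^2" where
  "phi_star = vec2 (1 / sqrt 2) (\<i> / sqrt 2)"

definition quenched_prob :: "(int \<Rightarrow> real) \<Rightarrow> nat \<Rightarrow> int \<Rightarrow> real" where
  "quenched_prob \<omega> n x =
     (if \<exists>l m. l + m = n \<and> x = - int l + int m
      then (norm (Xi \<omega> (nat ((int n - x) div 2)) (nat ((int n + x) div 2)) *v phi_star))\<^sup>2
      else 0)"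

end

theory Submission
  imports Defs
begin

(* The proof is a gauge transformation.  With the potential
   V(x) = omega(1) + ... + omega(x) (suitably extended to x < 0) and the diagonal
   phase matrices D(x) = diag(e^{-i V(x)}, e^{i(omega(x) - V(x))}) one has
   P_{y}^omega D(y) = D(y-1) P_y^0 and Q_y^omega D(y) = D(y+1) Q_y^0, hence
     Xi^omega_n(l,m) = D(m-l) Xi^0_n(l,m) diag(1, e^{-i omega(0)}).
   D is unitary and Xi^0 has real entries, so |Xi^omega_n(l,m) phi_*|^2 is an
   affine function  c + s sin(omega(0))  with c, s independent of omega.
   Finally, the law of omega(0) under the product measure is the symmetric
   marginal, so sin(omega(0)) averages to 0, while omega = 0 gives sin 0 = 0. *)

lemma mat2_mult:
  "mat2 a b c d ** mat2 e f g h = mat2 (a*e + b*g) (a*f + b*h) (c*e + d*g) (c*f + d*h)"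
  by (simp add: matrix_matrix_mult_def mat2_def vec_eq_iff forall_2 sum_2)

lemma mat2_vec: "mat2 a b c d *v vec2 x y = vec2 (a*x + b*y) (c*x + d*y)"
  by (simp add: matrix_vector_mult_def mat2_def vec2_def vec_eq_iff forall_2 sum_2)

lemma mat2_eta: "(A :: complex^2^2) = mat2 (A$1$1) (A$1$2) (A$2$1) (A$2$2)"
  by (simp add: mat2_def vec_eq_iff forall_2)

lemma mat2_one: "mat 1 = mat2 1 0 0 1"
  by (simp add: mat_def mat2_def vec_eq_iff forall_2)

lemma mat2_entries [simp]:
  "mat2 a b c d $ 1 $ 1 = a" "mat2 a b c d $ 1 $ 2 = b"
  "mat2 a b c d $ 2 $ 1 = c" "mat2 a b c d $ 2 $ 2 = d"
  by (simp_all add: mat2_def)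

lemma norm_vec2_squared: "(norm (vec2 a b))\<^sup>2 = (cmod a)\<^sup>2 + (cmod b)\<^sup>2"
  by (simp add: norm_vec_def L2_set_def sum_2 vec2_def)

text \<open>The library only provides left distributivity of the matrix product.\<close>
lemma matrix_add_rdistrib:
  "(B + C) ** A = B ** A + C ** (A :: 'a::semiring_1^'n^'m)"
  by (simp add: matrix_matrix_mult_def vec_eq_iff distrib_right sum.distrib)

definition potential :: "(int \<Rightarrow> real) \<Rightarrow> int \<Rightarrow> real" where
  "potential \<omega> x =
     (if 0 \<le> x then (\<Sum>y\<in>{1..x}. \<omega> y) else - (\<Sum>y\<in>{x+1..0}. \<omega> y))"

lemma potential_zero [simp]: "potential \<omega> 0 = 0"
  by (simp add: potential_def)

lemma potential_step: "potential \<omega> x = potential \<omega> (x - 1) + \<omega> x"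
proof (cases "1 \<le> x")
  case True
  then have "{1..x} = insert x {1..x-1}" by auto
  with True show ?thesis by (simp add: potential_def add.commute)
next
  case False
  then consider "x = 0" | "x < 0" by linarith
  then show ?thesis
  proof cases
    case 2
    then have "{x..0} = insert x {x+1..0}" by auto
    with 2 show ?thesis by (simp add: potential_def)
  qed (simp add: potential_def)
qed

text \<open>The unitary diagonal phase matrix D(x) that conjugates the coin at x to the Hadamard coin.\<close>
definition gauge :: "(int \<Rightarrow> real) \<Rightarrow> int \<Rightarrow> complex^2^2" where
  "gauge \<omega> x = mat2 (cis (- potential \<omega> x)) 0 0 (cis (\<omega> x - potential \<omega> x))"

lemma Pmat_gauge: "Pmat \<omega> (x + 1) ** gauge \<omega> (x + 1) = gauge \<omega> x ** Pmat (\<lambda>_. 0) (x + 1)"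
proof -
  have step: "potential \<omega> (x + 1) = potential \<omega> x + \<omega> (x + 1)"
    using potential_step[of \<omega> "x + 1"] by simp
  show ?thesis
    unfolding Pmat_def Ucoin_def gauge_def mat2_mult mat2_entries step
    by (simp add: cis_mult field_simps)
qed

lemma Qmat_gauge: "Qmat \<omega> (x - 1) ** gauge \<omega> (x - 1) = gauge \<omega> x ** Qmat (\<lambda>_. 0) (x - 1)"
proof -
  have step: "potential \<omega> x = potential \<omega> (x - 1) + \<omega> x"
    by (rule potential_step)
  show ?thesis
    unfolding Qmat_def Ucoin_def gauge_def mat2_mult mat2_entries step
    by (simp add: cis_mult field_simps)
qed

theorem Xi_gauge:
  "Xi \<omega> l m = gauge \<omega> (int m - int l) ** Xi (\<lambda>_. 0) l m ** mat2 1 0 0 (cis (- \<omega> 0))"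
proof (induction \<omega> l m rule: Xi.induct)
  case (1 \<omega>)
  show ?case by (simp add: gauge_def mat2_one mat2_mult cis_mult)
next
  case (2 \<omega> l)
  have x: "- int (Suc l) + 1 = (int 0 - int (Suc l)) + 1" "int 0 - int l = (int 0 - int (Suc l)) + 1"
    by simp_all
  show ?case
    unfolding Xi.simps 2 x
    by (simp only: matrix_mul_assoc Pmat_gauge[symmetric])
next
  case (3 \<omega> m)
  have x: "int (Suc m) - 1 = (int (Suc m) - int 0) - 1" "int m - int 0 = (int (Suc m) - int 0) - 1"
    by simp_all
  show ?case
    unfolding Xi.simps 3 x
    by (simp only: matrix_mul_assoc Qmat_gauge[symmetric])
next
  case (4 \<omega> l m)
  have x: "- int (Suc l) + int (Suc m) + 1 = (int (Suc m) - int (Suc l)) + 1"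
    "int (Suc m) - int l = (int (Suc m) - int (Suc l)) + 1"
    "- int (Suc l) + int (Suc m) - 1 = (int (Suc m) - int (Suc l)) - 1"
    "int m - int (Suc l) = (int (Suc m) - int (Suc l)) - 1"
    by simp_all
  show ?case
    unfolding Xi.simps 4 x
    by (simp only: matrix_mul_assoc Pmat_gauge[symmetric] Qmat_gauge[symmetric]
        matrix_add_ldistrib matrix_add_rdistrib)
qed

lemma real_entries_mult:
  assumes "\<And>i j. A $ i $ j \<in> \<real>" and "\<And>i j. B $ i $ j \<in> \<real>"
  shows "((A :: complex^2^2) ** B) $ i $ j \<in> \<real>"
  using assms by (simp add: matrix_matrix_mult_def sum_2 Reals_add Reals_mult)

lemma free_coins_real: "Pmat (\<lambda>_. 0) y $ i $ j \<in> \<real>" "Qmat (\<lambda>_. 0) y $ i $ j \<in> \<real>"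
  using exhaust_2[of i] exhaust_2[of j] by (auto simp: Pmat_def Qmat_def Ucoin_def mat2_def)

lemma Xi_free_real: "Xi (\<lambda>_. 0) l m $ i $ j \<in> \<real>"
proof -
  have "\<omega> = (\<lambda>_. 0) \<Longrightarrow> Xi \<omega> l m $ i $ j \<in> \<real>" for \<omega>
  proof (induction \<omega> l m arbitrary: i j rule: Xi.induct)
    case (4 \<omega> l m)
    then show ?case by (simp add: real_entries_mult free_coins_real Reals_add)
  qed (simp_all add: mat_def real_entries_mult free_coins_real)
  then show ?thesis by simp
qed

lemma cmod_twisted_combination:
  "(cmod (of_real h * (1 / sqrt 2) + of_real k * (cis (- t) * (\<i> / sqrt 2))))\<^sup>2
     = (h\<^sup>2 + k\<^sup>2) / 2 + h * k * sin t"
proof -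
  let ?z = "of_real h * (1 / sqrt 2) + of_real k * (cis (- t) * (\<i> / sqrt 2))"
  have "Re ?z = (h + k * sin t) / sqrt 2" by (simp add: add_divide_distrib)
  moreover have "Im ?z = k * cos t / sqrt 2" by simp
  ultimately have "(cmod ?z)\<^sup>2 = ((h + k * sin t)\<^sup>2 + (k * cos t)\<^sup>2) / 2"
    by (simp add: cmod_power2 power_divide)
  also have "(k * cos t)\<^sup>2 = k\<^sup>2 - (k * sin t)\<^sup>2"
    using sin_cos_squared_add[of t] by (simp add: power_mult_distrib algebra_simps flip: distrib_left)
  also have "((h + k * sin t)\<^sup>2 + (k\<^sup>2 - (k * sin t)\<^sup>2)) / 2 = (h\<^sup>2 + k\<^sup>2) / 2 + h * k * sin t"
    by (simp add: power2_sum algebra_simps)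
  finally show ?thesis .
qed

lemma norm_Xi_phi_star_affine:
  "\<exists>c s. \<forall>\<omega>. (norm (Xi \<omega> l m *v phi_star))\<^sup>2 = c + s * sin (\<omega> 0)"
proof -
  define h where "h i j = Re (Xi (\<lambda>_. 0) l m $ i $ j)" for i j
  have free: "Xi (\<lambda>_. 0) l m = mat2 (of_real (h 1 1)) (of_real (h 1 2)) (of_real (h 2 1)) (of_real (h 2 2))"
    unfolding h_def using Xi_free_real[of l m] by (subst mat2_eta) (simp add: of_real_Re)
  define twisted where
    "twisted a b t = of_real a * (1 / sqrt 2) + of_real b * (cis (- t) * (\<i> / sqrt 2))" for a b t
  have "(norm (Xi \<omega> l m *v phi_star))\<^sup>2
      = ((h 1 1)\<^sup>2 + (h 1 2)\<^sup>2 + (h 2 1)\<^sup>2 + (h 2 2)\<^sup>2) / 2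
        + (h 1 1 * h 1 2 + h 2 1 * h 2 2) * sin (\<omega> 0)" for \<omega>
  proof -
    have "Xi \<omega> l m *v phi_star
        = gauge \<omega> (int m - int l) *v vec2 (twisted (h 1 1) (h 1 2) (\<omega> 0)) (twisted (h 2 1) (h 2 2) (\<omega> 0))"
      unfolding Xi_gauge[of \<omega>] free phi_star_def twisted_def
      by (simp add: matrix_vector_mul_assoc[symmetric] mat2_vec)
    then have "(norm (Xi \<omega> l m *v phi_star))\<^sup>2
        = (cmod (twisted (h 1 1) (h 1 2) (\<omega> 0)))\<^sup>2 + (cmod (twisted (h 2 1) (h 2 2) (\<omega> 0)))\<^sup>2"
      by (simp add: gauge_def mat2_vec norm_vec2_squared norm_mult)
    then show ?thesis
      unfolding twisted_def cmod_twisted_combination by (simp add: algebra_simps add_divide_distrib)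
  qed
  then show ?thesis by blast
qed

lemma quenched_prob_affine: "\<exists>c s. \<forall>\<omega>. quenched_prob \<omega> n x = c + s * sin (\<omega> 0)"
proof (cases "\<exists>l m. l + m = n \<and> x = - int l + int m")
  case True
  then show ?thesis
    unfolding quenched_prob_def using norm_Xi_phi_star_affine by simp
next
  case False
  have "quenched_prob \<omega> n x = 0 + 0 * sin (\<omega> 0)" for \<omega>
    unfolding quenched_prob_def if_not_P[OF False] by simp
  then show ?thesis by blast
qed

lemma integral_odd_symmetric:
  fixes M :: "real measure" and f :: "real \<Rightarrow> real"
  assumes borel: "sets M = sets borel"
    and symm: "distr M borel uminus = M"
    and f: "f \<in> borel_measurable borel"
    and odd: "\<And>t. f (- t) = - f t"
  shows "(\<integral>t. f t \<partial>M) = 0"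
proof -
  have "(\<integral>t. f t \<partial>M) = (\<integral>t. f t \<partial>distr M borel uminus)"
    using symm by simp
  also have "\<dots> = (\<integral>t. f (- t) \<partial>M)"
    by (rule integral_distr) (use f in \<open>simp_all add: measurable_cong_sets[OF borel refl]\<close>)
  also have "\<dots> = - (\<integral>t. f t \<partial>M)"
    by (simp add: odd)
  finally show ?thesis by simp
qed

lemma integral_PiM_coordinate:
  fixes g :: "'b \<Rightarrow> real"
  assumes prob: "\<And>i. i \<in> I \<Longrightarrow> prob_space (M i)"
    and i: "i \<in> I"
    and g: "g \<in> borel_measurable (M i)"
  shows "(\<integral>\<omega>. g (\<omega> i) \<partial>PiM I M) = (\<integral>t. g t \<partial>M i)"
proof -
  have coord: "(\<lambda>\<omega>. \<omega> i) \<in> measurable (PiM I M) (M i)"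
    using i by (rule measurable_component_singleton)
  have "(\<integral>\<omega>. g (\<omega> i) \<partial>PiM I M) = (\<integral>t. g t \<partial>distr (PiM I M) (M i) (\<lambda>\<omega>. \<omega> i))"
    by (rule integral_distr[symmetric, OF coord g])
  also have "\<dots> = (\<integral>t. g t \<partial>M i)"
    by (simp add: distr_PiM_component[of I M, OF prob i])
  finally show ?thesis .
qed

theorem mainTheorem7:
  fixes Pbar :: "int \<Rightarrow> real measure"
  assumes prob: "\<And>x. prob_space (Pbar x)"
    and borel: "\<And>x. sets (Pbar x) = sets borel"
    and symm: "distr (Pbar 0) borel uminus = Pbar 0"
  shows "\<forall>(n::nat) (x::int).
           (\<integral>\<omega>. quenched_prob \<omega> n x \<partial>(PiM UNIV Pbar)) = quenched_prob (\<lambda>_. 0) n x"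
proof (intro allI)
  fix n :: nat and x :: int
  let ?M = "PiM UNIV Pbar"
  interpret prob_space ?M
    using prob by (intro prob_space_PiM)
  obtain c s where affine: "\<And>\<omega>. quenched_prob \<omega> n x = c + s * sin (\<omega> 0)"
    using quenched_prob_affine by blast
  have sin_borel: "sin \<in> borel_measurable (Pbar 0)"
    by (simp add: measurable_cong_sets[OF borel refl])
  have "(\<integral>\<omega>. sin (\<omega> 0) \<partial>?M) = (\<integral>t. sin t \<partial>Pbar 0)"
    by (rule integral_PiM_coordinate) (simp_all add: prob sin_borel)
  also have "\<dots> = 0"
    using borel symm by (rule integral_odd_symmetric) simp_all
  finally have mean_sin: "(\<integral>\<omega>. sin (\<omega> 0) \<partial>?M) = 0" .
  have "(\<lambda>\<omega>. sin (\<omega> 0)) \<in> borel_measurable ?M"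
    by (rule measurable_compose[OF measurable_component_singleton[of 0 UNIV Pbar] sin_borel]) simp
  then have "integrable ?M (\<lambda>\<omega>. sin (\<omega> 0))"
    by (intro integrable_const_bound[where B = 1]) auto
  then show "(\<integral>\<omega>. quenched_prob \<omega> n x \<partial>?M) = quenched_prob (\<lambda>_. 0) n x"
    by (simp add: affine mean_sin prob_space)
qed

end
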